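(* Let $\mu=(d_1,d_2,\dots)$ be a sequence of positive integers and let $\{R_i\mid i\in I\}$ be a collection of $*$-regular subrings of $\mathcal{M}^{alg}_\mu$. Then $\bigcap_{i\in I}R_i$ is also a $*$-regular subring of $\mathcal{M}^{alg}_\mu$.
   Context: A ring is von Neumann regular if every principal right ideal is generated by an idempotent; a $*$-regular ring is a regular ring with involution in which $a^*a=0$ implies $a=0$; a $*$-regular subring is a subring closed under the involution which is itself $*$-regular. Fix a nonprincipal ultrafilter $\omega$ on $\mathbb{N}$. Let $\mathcal{J}$ be the ideal of $\prod_n\mathrm{Mat}_{d_n\times d_n}(\mathbb{C})$ consisting of sequences $(a_n)$ with $\lim_\omega\mathrm{rank}(a_n)/d_n=0$, and $\mathcal{M}^{alg}_\mu=\prod_n\mathrm{Mat}_{d_n\times d_n}(\mathbb{C})/\mathcal{J}$ with involution induced by coordinatewise conjugate transpose. *)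

theory Defs
  imports "HOL-Algebra.QuotRing" "HOL-Algebra.Subrings"
    "Jordan_Normal_Form.Schur_Decomposition" "Jordan_Normal_Form.DL_Rank"
begin

definition is_ultrafilter :: "'a filter \<Rightarrow> bool" where
  "is_ultrafilter F \<longleftrightarrow> F \<noteq> bot \<and> (\<forall>P. eventually P F \<or> eventually (\<lambda>x. \<not> P x) F)"

definition nonprincipal :: "'a filter \<Rightarrow> bool" where
  "nonprincipal F \<longleftrightarrow> (\<forall>x. \<not> eventually (\<lambda>y. y = x) F)"

definition mrank :: "complex mat \<Rightarrow> nat" where
  "mrank A = vec_space.rank (dim_row A) A"

definition prod_mat_ring :: "(nat \<Rightarrow> nat) \<Rightarrow> (nat \<Rightarrow> complex mat) ring" where
  "prod_mat_ring d =
     \<lparr>carrier = {a. \<forall>n. a n \<in> carrier_mat (d n) (d n)},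
      monoid.mult = (\<lambda>a b n. a n * b n),
      one = (\<lambda>n. 1\<^sub>m (d n)),
      zero = (\<lambda>n. 0\<^sub>m (d n) (d n)),
      add = (\<lambda>a b n. a n + b n)\<rparr>"

definition null_ideal :: "nat filter \<Rightarrow> (nat \<Rightarrow> nat) \<Rightarrow> (nat \<Rightarrow> complex mat) set" where
  "null_ideal \<omega> d = {a \<in> carrier (prod_mat_ring d).
      ((\<lambda>n. real (mrank (a n)) / real (d n)) \<longlongrightarrow> 0) \<omega>}"

definition M_alg :: "nat filter \<Rightarrow> (nat \<Rightarrow> nat) \<Rightarrow> (nat \<Rightarrow> complex mat) set ring" where
  "M_alg \<omega> d = prod_mat_ring d Quot null_ideal \<omega> d"

definition alg_star :: "(nat \<Rightarrow> complex mat) set \<Rightarrow> (nat \<Rightarrow> complex mat) set" where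
  "alg_star X = (\<lambda>a n. mat_adjoint (a n)) ` X"

definition vN_regular_sub :: "('a, 'b) ring_scheme \<Rightarrow> 'a set \<Rightarrow> bool" where
  "vN_regular_sub R S \<longleftrightarrow> (\<forall>a\<in>S. \<exists>e\<in>S. e \<otimes>\<^bsub>R\<^esub> e = e \<and>
       {a \<otimes>\<^bsub>R\<^esub> r | r. r \<in> S} = {e \<otimes>\<^bsub>R\<^esub> r | r. r \<in> S})"

definition star_regular_subring :: "nat filter \<Rightarrow> (nat \<Rightarrow> nat) \<Rightarrow> (nat \<Rightarrow> complex mat) set set \<Rightarrow> bool" where
  "star_regular_subring \<omega> d S \<longleftrightarrow>
     subring S (M_alg \<omega> d) \<and>
     (\<forall>x\<in>S. alg_star x \<in> S) \<and>
     vN_regular_sub (M_alg \<omega> d) S \<and>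
     (\<forall>x\<in>S. alg_star x \<otimes>\<^bsub>M_alg \<omega> d\<^esub> x = \<zero>\<^bsub>M_alg \<omega> d\<^esub> \<longrightarrow> x = \<zero>\<^bsub>M_alg \<omega> d\<^esub>)"

end

theory Submission
  imports Defs
begin

text \<open>In a \<open>*\<close>-regular ring every element \<open>a\<close> has a Moore--Penrose inverse \<open>x\<close>
  (\<open>a x a = a\<close>, \<open>x a x = x\<close>, with \<open>a x\<close> and \<open>x a\<close> self-adjoint), and in any ring with involution
  such an \<open>x\<close> is unique. So for \<open>a\<close> in the intersection, the Moore--Penrose inverse computed in
  any single \<open>R\<^sub>i\<close> lies in all of them, and the idempotent \<open>a x\<close> generates the principal right
  ideal \<open>a T\<close> of the intersection \<open>T\<close>.\<close>

subsection \<open>Moore--Penrose inverses in rings with involution\<close>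

lemma (in ring) vN_regular_sub_imp_inner_inverse:
  assumes "subring S R" "vN_regular_sub R S" "a \<in> S"
  shows "\<exists>x\<in>S. a \<otimes> x \<otimes> a = a"
proof -
  note S = subringE[OF assms(1)]
  obtain e where e: "e \<in> S" "e \<otimes> e = e" "{a \<otimes> r | r. r \<in> S} = {e \<otimes> r | r. r \<in> S}"
    using assms(2,3) unfolding vN_regular_sub_def by blast
  have [simp]: "a \<in> carrier R" "e \<in> carrier R" using assms(3) e(1) S(1) by auto
  have "a \<otimes> \<one> \<in> {a \<otimes> r | r. r \<in> S}" "e \<otimes> \<one> \<in> {e \<otimes> r | r. r \<in> S}"
    using S(3) by blast+
  then have "a \<in> {e \<otimes> r | r. r \<in> S}" "e \<in> {a \<otimes> r | r. r \<in> S}"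
    using e(3) by simp_all
  then obtain t x where t: "t \<in> S" "a = e \<otimes> t" and x: "x \<in> S" "e = a \<otimes> x"
    by blast
  have "a \<otimes> x \<otimes> a = e \<otimes> a" by (simp only: x(2))
  also have "\<dots> = e \<otimes> e \<otimes> t" using t S(1) by (simp add: m_assoc subsetD)
  also have "\<dots> = a" using e(2) t(2) by simp
  finally show ?thesis using x(1) by blast
qed

lemma (in ring) vN_regular_subI:
  assumes "subring S R" and inner_inverse: "\<And>a. a \<in> S \<Longrightarrow> \<exists>x\<in>S. a \<otimes> x \<otimes> a = a"
  shows "vN_regular_sub R S"
  unfolding vN_regular_sub_def
proof
  fix a assume a: "a \<in> S"
  note S = subringE[OF assms(1)]
  obtain x where x: "x \<in> S" "a \<otimes> x \<otimes> a = a" using inner_inverse a by blast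
  have S_carrier [simp]: "r \<in> S \<Longrightarrow> r \<in> carrier R" for r using S(1) by blast
  have "a \<otimes> x \<otimes> (a \<otimes> x) = a \<otimes> x" using x a by (simp flip: m_assoc)
  moreover have "{a \<otimes> r | r. r \<in> S} = {a \<otimes> x \<otimes> r | r. r \<in> S}"
  proof (intro equalityI subsetI)
    fix z assume "z \<in> {a \<otimes> r | r. r \<in> S}"
    then obtain r where r: "r \<in> S" "z = a \<otimes> r" by blast
    have "z = a \<otimes> x \<otimes> a \<otimes> r" using r(2) x(2) by simp
    also have "\<dots> = a \<otimes> x \<otimes> (a \<otimes> r)" using a x(1) r(1) by (simp add: m_assoc)
    finally show "z \<in> {a \<otimes> x \<otimes> r | r. r \<in> S}" using S(6) a r(1) by blast
  next
    fix z assume "z \<in> {a \<otimes> x \<otimes> r | r. r \<in> S}"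
    then obtain r where r: "r \<in> S" "z = a \<otimes> x \<otimes> r" by blast
    then have "z = a \<otimes> (x \<otimes> r)" using a x(1) by (simp add: m_assoc)
    then show "z \<in> {a \<otimes> r | r. r \<in> S}" using S(6) x(1) r(1) by blast
  qed
  ultimately show "\<exists>e\<in>S. e \<otimes> e = e \<and> {a \<otimes> r | r. r \<in> S} = {e \<otimes> r | r. r \<in> S}"
    using S(6) a x(1) by blast
qed

locale involutive_ring = ring R for R (structure) +
  fixes star :: "'a \<Rightarrow> 'a"
  assumes star_closed [intro, simp]: "x \<in> carrier R \<Longrightarrow> star x \<in> carrier R"
    and star_star [simp]: "x \<in> carrier R \<Longrightarrow> star (star x) = x"
    and star_mult: "x \<in> carrier R \<Longrightarrow> y \<in> carrier R \<Longrightarrow> star (x \<otimes> y) = star y \<otimes> star x"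
begin

definition moore_penrose_inverse :: "'a \<Rightarrow> 'a \<Rightarrow> bool" where
  "moore_penrose_inverse a x \<longleftrightarrow> a \<otimes> x \<otimes> a = a \<and> x \<otimes> a \<otimes> x = x \<and>
     star (a \<otimes> x) = a \<otimes> x \<and> star (x \<otimes> a) = x \<otimes> a"

lemma moore_penrose_inverse_unique:
  assumes [simp]: "a \<in> carrier R" "x \<in> carrier R" "y \<in> carrier R"
    and "moore_penrose_inverse a x" "moore_penrose_inverse a y"
  shows "x = y"
proof -
  have x: "a \<otimes> x \<otimes> a = a" "x \<otimes> a \<otimes> x = x" "star (a \<otimes> x) = a \<otimes> x" "star (x \<otimes> a) = x \<otimes> a"
    and y: "a \<otimes> y \<otimes> a = a" "y \<otimes> a \<otimes> y = y" "star (a \<otimes> y) = a \<otimes> y" "star (y \<otimes> a) = y \<otimes> a"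
    using assms(4,5) unfolding moore_penrose_inverse_def by auto
  have ax: "a \<otimes> x = star x \<otimes> star a" and xa: "x \<otimes> a = star a \<otimes> star x"
    and ay: "a \<otimes> y = star y \<otimes> star a" and ya: "y \<otimes> a = star a \<otimes> star y"
    using x(3,4) y(3,4) by (simp_all add: star_mult)
  have sa_y: "star a = star a \<otimes> star y \<otimes> star a" and sa_x: "star a = star a \<otimes> star x \<otimes> star a"
    using arg_cong[OF y(1), of star] arg_cong[OF x(1), of star] by (simp_all add: star_mult m_assoc)
  have "x = x \<otimes> (star x \<otimes> star a) \<otimes> (star y \<otimes> star a)"
    using x(2) sa_y by (metis ax m_assoc m_closed star_closed assms(1-3))
  also have "\<dots> = x \<otimes> a \<otimes> y"
    using x(2) y(1) by (simp add: ax[symmetric] ay[symmetric] m_assoc)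
  also have "\<dots> = (star a \<otimes> star x) \<otimes> (star a \<otimes> star y) \<otimes> y"
    using y(2) by (simp add: xa[symmetric] ya[symmetric] m_assoc)
  also have "\<dots> = y"
    using y(2) sa_x by (metis ya m_assoc m_closed star_closed assms(1-3))
  finally show ?thesis .
qed

end

locale star_regular = involutive_ring +
  fixes S
  assumes subring_S: "subring S R"
    and star_mem: "x \<in> S \<Longrightarrow> star x \<in> S"
    and regular_S: "vN_regular_sub R S"
    and proper: "x \<in> S \<Longrightarrow> star x \<otimes> x = \<zero> \<Longrightarrow> x = \<zero>"
begin

lemma mem_carrier [simp]: "x \<in> S \<Longrightarrow> x \<in> carrier R"
  using subringE(1)[OF subring_S] by blast

lemma mult_mem [intro]: "x \<in> S \<Longrightarrow> y \<in> S \<Longrightarrow> x \<otimes> y \<in> S"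
  using subringE(6)[OF subring_S] by blast

lemma one_mem: "\<one> \<in> S"
  using subringE(3)[OF subring_S] .

text \<open>Properness applied to \<open>w = a (z - z')\<close>, for which \<open>w\<^sup>* w = (z - z')\<^sup>* a\<^sup>* a (z - z') = 0\<close>.\<close>
lemma star_mult_self_cancel:
  assumes "a \<in> S" "z \<in> S" "z' \<in> S" and eq: "star a \<otimes> a \<otimes> z = star a \<otimes> a \<otimes> z'"
  shows "a \<otimes> z = a \<otimes> z'"
proof -
  define t where "t = z \<ominus> z'"
  have tS: "t \<in> S" unfolding t_def a_minus_def using assms(2,3) subringE(5,7)[OF subring_S] by blast
  have [simp]: "a \<in> carrier R" "z \<in> carrier R" "z' \<in> carrier R" "t \<in> carrier R"
    using assms(1-3) tS by auto
  have "star a \<otimes> a \<otimes> t = \<zero>"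
    using eq by (simp add: t_def a_minus_def r_distr r_minus r_neg)
  then have "star (a \<otimes> t) \<otimes> (a \<otimes> t) = \<zero>"
    by (simp add: star_mult m_assoc)
  then have "a \<otimes> t = \<zero>" using proper tS assms(1) by blast
  moreover have "z = t \<oplus> z'" by (simp add: t_def a_minus_def a_assoc l_neg)
  ultimately show ?thesis by (simp add: r_distr)
qed

lemma left_factorization:
  assumes "a \<in> S"
  shows "\<exists>u\<in>S. a = u \<otimes> star a \<otimes> a \<and> a \<otimes> star u \<otimes> a = a"
proof -
  have saS: "star a \<in> S" using star_mem assms by blast
  obtain y where yS: "y \<in> S" and y: "star a \<otimes> a \<otimes> y \<otimes> (star a \<otimes> a) = star a \<otimes> a"
    using vN_regular_sub_imp_inner_inverse[OF subring_S regular_S] saS assms by blast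
  have [simp]: "a \<in> carrier R" "y \<in> carrier R" using assms yS by auto
  have "y \<otimes> star a \<otimes> a \<in> S" using yS saS assms by blast
  moreover have "star a \<otimes> a \<otimes> (y \<otimes> star a \<otimes> a) = star a \<otimes> a \<otimes> \<one>"
    using y by (simp add: m_assoc)
  ultimately have "a \<otimes> (y \<otimes> star a \<otimes> a) = a \<otimes> \<one>"
    by (rule star_mult_self_cancel[OF assms _ one_mem])
  then have u: "a = a \<otimes> y \<otimes> star a \<otimes> a" by (simp add: m_assoc)
  define u where "u = a \<otimes> y"
  have uS: "u \<in> S" unfolding u_def using assms yS by blast
  have [simp]: "u \<in> carrier R" using uS by simp
  have "star a = star a \<otimes> a \<otimes> star u"
    using arg_cong[OF u, of star] by (simp add: u_def star_mult m_assoc)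
  then have "star a \<otimes> a \<otimes> (star u \<otimes> a) = star a \<otimes> a \<otimes> \<one>"
    by (metis m_assoc m_closed r_one star_closed \<open>a \<in> carrier R\<close> \<open>u \<in> carrier R\<close>)
  moreover have "star u \<otimes> a \<in> S" using uS star_mem assms by blast
  ultimately have "a \<otimes> (star u \<otimes> a) = a \<otimes> \<one>"
    by (rule star_mult_self_cancel[OF assms _ one_mem, rotated])
  then have "a \<otimes> star u \<otimes> a = a" by (simp add: m_assoc)
  moreover have "a = u \<otimes> star a \<otimes> a" using u by (simp add: u_def)
  ultimately show ?thesis using uS by blast
qed

lemma moore_penrose_inverse_exists:
  assumes "a \<in> S"
  shows "\<exists>x\<in>S. moore_penrose_inverse a x"
proof -
  obtain u where uS: "u \<in> S" and u: "a = u \<otimes> star a \<otimes> a" "a \<otimes> star u \<otimes> a = a"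
    using left_factorization assms by blast
  obtain w where wS: "w \<in> S" and w: "star a = w \<otimes> a \<otimes> star a" "star a \<otimes> star w \<otimes> star a = star a"
    using left_factorization[of "star a"] star_mem assms by auto
  have [simp]: "a \<in> carrier R" "u \<in> carrier R" "w \<in> carrier R" using assms uS wS by auto
  define v where "v = star w"
  have [simp]: "v \<in> carrier R" by (simp add: v_def)
  have av: "a = a \<otimes> star a \<otimes> v" "a \<otimes> star v \<otimes> a = a"
    using arg_cong[OF w(1), of star] arg_cong[OF w(2), of star]
    by (simp_all add: v_def star_mult m_assoc)
  have sa_u: "star a = star a \<otimes> a \<otimes> star u" and sa_v: "star a = star v \<otimes> a \<otimes> star a"
    using arg_cong[OF u(1), of star] arg_cong[OF av(1), of star] by (simp_all add: star_mult m_assoc)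
  \<comment> \<open>from \<open>a = u a\<^sup>* a\<close> and \<open>a = a a\<^sup>* v\<close>\<close>
  define x where "x = star v \<otimes> a \<otimes> star u"
  have xS: "x \<in> S" unfolding x_def v_def using assms uS wS star_mem by auto
  have "a \<otimes> x = (a \<otimes> star v \<otimes> a) \<otimes> star u"
    by (simp add: x_def m_assoc)
  then have ax: "a \<otimes> x = a \<otimes> star u"
    using av(2) by simp
  have a_su: "a \<otimes> star u = u \<otimes> star a"
    using u(1) sa_u by (metis m_assoc m_closed star_closed \<open>a \<in> carrier R\<close> \<open>u \<in> carrier R\<close>)
  have xa: "x \<otimes> a = star v \<otimes> a"
    using u(2) by (simp add: x_def m_assoc)
  have sv_a: "star v \<otimes> a = star a \<otimes> v"
    using av(1) sa_v by (metis m_assoc m_closed star_closed \<open>a \<in> carrier R\<close> \<open>v \<in> carrier R\<close>)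
  have xax: "x \<otimes> a \<otimes> x = star v \<otimes> (a \<otimes> star v \<otimes> a) \<otimes> star u"
    using xa by (simp add: x_def m_assoc)
  have "a \<otimes> x \<otimes> a = a"
    using ax u(2) by simp
  moreover have "x \<otimes> a \<otimes> x = x"
    using xax av(2) by (simp add: x_def)
  moreover have "star (a \<otimes> x) = a \<otimes> x"
    using ax a_su by (simp add: star_mult)
  moreover have "star (x \<otimes> a) = x \<otimes> a"
    using xa sv_a by (simp add: star_mult)
  ultimately show ?thesis using xS unfolding moore_penrose_inverse_def by blast
qed

end

lemma star_regular_Inter:
  fixes R (structure)
  assumes "involutive_ring R star" and "I \<noteq> {}"
    and "\<And>i. i \<in> I \<Longrightarrow> star_regular R star (S i)"
  shows "star_regular R star (\<Inter>i\<in>I. S i)"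
proof -
  interpret involutive_ring R star by fact
  let ?T = "\<Inter>i\<in>I. S i"
  obtain i0 where i0: "i0 \<in> I" using assms(2) by blast
  interpret S0: star_regular R star "S i0" using assms(3)[OF i0] .
  have subring_T: "subring ?T R"
    using subring_Inter[of "S ` I"] assms(2,3) star_regular.subring_S by auto
  have "\<exists>x\<in>?T. a \<otimes> x \<otimes> a = a" if aT: "a \<in> ?T" for a
  proof -
    obtain x where x: "x \<in> S i0" "moore_penrose_inverse a x"
      using S0.moore_penrose_inverse_exists aT i0 by blast
    have "x \<in> S i" if i: "i \<in> I" for i
    proof -
      interpret Si: star_regular R star "S i" using assms(3)[OF i] .
      obtain y where "y \<in> S i" "moore_penrose_inverse a y"
        using Si.moore_penrose_inverse_exists aT i by blast
      then show ?thesis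
        using moore_penrose_inverse_unique x aT i0 by (metis INT_E S0.mem_carrier Si.mem_carrier)
    qed
    then show ?thesis using x(2) unfolding moore_penrose_inverse_def by blast
  qed
  then have "vN_regular_sub R ?T" by (rule vN_regular_subI[OF subring_T])
  moreover have "star x \<in> ?T" if "x \<in> ?T" for x
    using that star_regular.star_mem[OF assms(3)] by blast
  moreover have "x = \<zero>" if "x \<in> ?T" "star x \<otimes> x = \<zero>" for x
    using that i0 S0.proper by blast
  ultimately show ?thesis
    by (intro star_regular.intro star_regular_axioms.intro assms(1) subring_T) auto
qed

subsection \<open>Rank of products and adjoints\<close>

lemma (in vec_space) rank_le_if_cols_in_span:
  assumes A: "A \<in> carrier_mat n na" and B: "B \<in> carrier_mat n nb"
    and sub: "set (cols A) \<subseteq> span (set (cols B))"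
  shows "rank A \<le> rank B"
proof -
  define W where "W = span (set (cols B))"
  have sW: "subspace class_ring W V"
    unfolding W_def using B cols_dim carrier_matD(1) span_is_subspace by metis
  have sA: "subspace class_ring (span (set (cols A))) V"
    using A cols_dim carrier_matD(1) span_is_subspace by metis
  have "span (set (cols A)) \<subseteq> W"
    unfolding W_def using sub span_is_subset B by (metis cols_dim carrier_matD(1) span_is_submodule)
  then have "subspace class_ring (span (set (cols A))) (vs W)"
    using nested_subspaces[OF sW sA] by blast
  moreover have "vectorspace.fin_dim class_ring (vs W)"
    unfolding W_def using fin_dim_span_cols B by blast
  ultimately show ?thesis unfolding rank_def W_def[symmetric]
    using vectorspace.subspace_dim[OF subspace_is_vs[OF sW]] fin_dim_span_cols[OF A] by auto
qed

lemma (in vec_space) rank_mult_le_inner_dim: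
  assumes C: "C \<in> carrier_mat n r" and D: "D \<in> carrier_mat r m"
  shows "rank (C * D) \<le> r"
proof -
  have CD: "C * D \<in> carrier_mat n m" using C D by auto
  have "set (cols (C * D)) \<subseteq> span (set (cols C))"
  proof
    fix v assume "v \<in> set (cols (C * D))"
    then obtain j where j: "j < m" "v = col (C * D) j"
      using CD by (metis cols_length cols_nth in_set_conv_nth carrier_matD(2))
    have "v = C *\<^sub>v col D j" using j C D by (auto simp: mult_mat_vec_def)
    moreover have "col D j \<in> carrier_vec (dim_col C)" using C D j by auto
    ultimately have "v \<in> col_space C" using col_space_eq[OF C] C by auto
    then show "v \<in> span (set (cols C))" unfolding col_space_def .
  qed
  then have "rank (C * D) \<le> rank C" by (rule rank_le_if_cols_in_span[OF CD C])
  also have "\<dots> \<le> r" using rank_le_nc[OF C] .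
  finally show ?thesis .
qed

lemma (in vec_space) maximal_indpt_cols_span:
  assumes A: "A \<in> carrier_mat n m" and S: "maximal S (\<lambda>T. T \<subseteq> set (cols A) \<and> lin_indpt T)"
  shows "set (cols A) \<subseteq> span S"
proof
  have Ssub: "S \<subseteq> set (cols A)" and Sli: "lin_indpt S" using S unfolding maximal_def by auto
  have colsA: "set (cols A) \<subseteq> carrier_vec n" using A cols_dim carrier_matD(1) by metis
  fix v assume v: "v \<in> set (cols A)"
  show "v \<in> span S"
  proof (rule ccontr)
    assume nin: "v \<notin> span S"
    have "v \<notin> S" using nin span_mem Ssub colsA by (meson in_own_span subset_trans)
    then have "lin_indpt (S \<union> {v})"
      using lin_dep_iff_in_span[OF _ Sli] nin v Ssub colsA by auto
    then have "S \<union> {v} = S" using S v Ssub unfolding maximal_def by blast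
    then show False using \<open>v \<notin> S\<close> by auto
  qed
qed

lemma (in vec_space) rank_factorization:
  assumes A: "A \<in> carrier_mat n m"
  obtains C D where "C \<in> carrier_mat n (rank A)" "D \<in> carrier_mat (rank A) m" "A = C * D"
proof -
  obtain S where S: "maximal S (\<lambda>T. T \<subseteq> set (cols A) \<and> lin_indpt T)"
    using maximal_exists[of "(\<lambda>T. T \<subseteq> set (cols A) \<and> lin_indpt T)" "card (set (cols A))" "{}"]
    by (meson List.finite_set card_mono empty_iff empty_subsetI finite_lin_indpt2 rev_finite_subset)
  have Ssub: "S \<subseteq> set (cols A)" using S unfolding maximal_def by auto
  obtain ws where ws: "set ws = S" "distinct ws"
    using finite_distinct_list finite_subset[OF Ssub] by blast
  have wsc: "set ws \<subseteq> carrier_vec n" using ws Ssub A cols_dim carrier_matD(1) by blast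
  define C where "C = mat_of_cols n ws"
  have C: "C \<in> carrier_mat n (rank A)"
    unfolding C_def using rank_card_indpt[OF A S] ws distinct_card by (metis mat_of_cols_carrier(1))
  have "\<exists>x. x \<in> carrier_vec (rank A) \<and> C *\<^sub>v x = col A j" if j: "j < m" for j
  proof -
    have "col A j \<in> set (cols A)" using j A by (metis cols_length cols_nth nth_mem carrier_matD(2))
    then have "col A j \<in> col_space C"
      unfolding col_space_def C_def using wsc ws maximal_indpt_cols_span[OF A S] by auto
    then show ?thesis using col_space_eq[OF C] C by auto
  qed
  then obtain x where x: "\<And>j. j < m \<Longrightarrow> x j \<in> carrier_vec (rank A) \<and> C *\<^sub>v x j = col A j"
    by metis
  define D where "D = mat_of_cols (rank A) (map x [0..<m])"
  have D: "D \<in> carrier_mat (rank A) m" unfolding D_def by (metis length_map diff_zero length_upt mat_of_cols_carrier(1))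
  have colD: "col D j = x j" if "j < m" for j
    unfolding D_def using that x[OF that] by (auto simp: mat_of_cols_def intro!: eq_vecI)
  have "A = C * D"
  proof (rule eq_matI)
    fix i j assume "i < dim_row (C * D)" and "j < dim_col (C * D)"
    then have ij: "i < n" "j < m" using C D by auto
    have "(C * D) $$ (i, j) = (C *\<^sub>v col D j) $ i" using ij C D by simp
    also have "\<dots> = A $$ (i, j)" using x[OF ij(2)] colD[OF ij(2)] ij A by simp
    finally show "A $$ (i, j) = (C * D) $$ (i, j)" by simp
  qed (use A C D in auto)
  then show ?thesis using C D that by blast
qed

lemma adjoint_carrier [intro]: "A \<in> carrier_mat r c \<Longrightarrow> mat_adjoint A \<in> carrier_mat c r"
  unfolding mat_adjoint_def by auto

lemma adjoint_dims [simp]: "dim_row (mat_adjoint A) = dim_col A" "dim_col (mat_adjoint A) = dim_row A"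
  unfolding mat_adjoint_def by auto

lemma adjoint_index:
  "i < dim_col A \<Longrightarrow> j < dim_row A \<Longrightarrow> mat_adjoint A $$ (i, j) = cnj (A $$ (j, i))"
  unfolding mat_adjoint_def by (simp add: mat_of_rows_def)

lemma adjoint_adjoint [simp]: "mat_adjoint (mat_adjoint (A :: complex mat)) = A"
  by (rule eq_matI) (auto simp: adjoint_index)

lemma adjoint_add:
  "A \<in> carrier_mat r c \<Longrightarrow> B \<in> carrier_mat r c \<Longrightarrow>
   mat_adjoint (A + B) = mat_adjoint A + (mat_adjoint B :: complex mat)"
  by (rule eq_matI) (auto simp: adjoint_index)

lemma adjoint_mult:
  assumes A: "A \<in> carrier_mat r c" and B: "B \<in> carrier_mat c e"
  shows "mat_adjoint (A * B) = mat_adjoint B * (mat_adjoint A :: complex mat)"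
proof (rule eq_matI)
  fix i j assume "i < dim_row (mat_adjoint B * mat_adjoint A)" "j < dim_col (mat_adjoint B * mat_adjoint A)"
  then have ij: "i < e" "j < r" using A B by auto
  have "mat_adjoint (A * B) $$ (i, j) = cnj (\<Sum>l<c. A $$ (j, l) * B $$ (l, i))"
    using ij A B by (simp add: adjoint_index scalar_prod_def atLeast0LessThan)
  also have "\<dots> = (\<Sum>l<c. cnj (B $$ (l, i)) * cnj (A $$ (j, l)))"
    by (simp add: cnj_sum mult.commute)
  also have "\<dots> = (mat_adjoint B * mat_adjoint A) $$ (i, j)"
    using ij A B by (simp add: scalar_prod_def atLeast0LessThan adjoint_index)
  finally show "mat_adjoint (A * B) $$ (i, j) = (mat_adjoint B * mat_adjoint A) $$ (i, j)" .
qed (use A B in auto)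

lemma mrank_factorization:
  assumes "A \<in> carrier_mat k m"
  obtains C D where "C \<in> carrier_mat k (mrank A)" "D \<in> carrier_mat (mrank A) m" "A = C * D"
proof -
  obtain C D where "C \<in> carrier_mat k (vec_space.rank k A)" "D \<in> carrier_mat (vec_space.rank k A) m" "A = C * D"
    by (rule vec_space.rank_factorization[OF assms])
  then show ?thesis using that assms by (simp add: mrank_def)
qed

lemma mrank_mult_le_inner_dim:
  assumes "C \<in> carrier_mat k r" and "D \<in> carrier_mat r m"
  shows "mrank (C * D) \<le> r"
  using vec_space.rank_mult_le_inner_dim[OF assms] assms(1) by (simp add: mrank_def)

lemma mrank_mult_le_left:
  assumes "A \<in> carrier_mat k k" and "(B :: complex mat) \<in> carrier_mat k k"
  shows "mrank (A * B) \<le> mrank A"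
proof -
  obtain C D where "C \<in> carrier_mat k (mrank A)" "D \<in> carrier_mat (mrank A) k" "A = C * D"
    using mrank_factorization assms(1) by blast
  then show ?thesis
    using mrank_mult_le_inner_dim[of C k _ "D * B" k] assms(2) by (simp add: assoc_mult_mat)
qed

lemma mrank_mult_le_right:
  assumes "A \<in> carrier_mat k k" and "(B :: complex mat) \<in> carrier_mat k k"
  shows "mrank (A * B) \<le> mrank B"
proof -
  obtain C D where "C \<in> carrier_mat k (mrank B)" "D \<in> carrier_mat (mrank B) k" "B = C * D"
    using mrank_factorization assms(2) by blast
  then show ?thesis
    using mrank_mult_le_inner_dim[of "A * C" k _ D k] assms(1) by (simp add: assoc_mult_mat)
qed

lemma mrank_adjoint_le:
  assumes "(A :: complex mat) \<in> carrier_mat k k"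
  shows "mrank (mat_adjoint A) \<le> mrank A"
proof -
  obtain C D where "C \<in> carrier_mat k (mrank A)" "D \<in> carrier_mat (mrank A) k" "A = C * D"
    using mrank_factorization assms by blast
  then have "mat_adjoint A = mat_adjoint D * mat_adjoint C"
    and "mat_adjoint D \<in> carrier_mat k (mrank A)" "mat_adjoint C \<in> carrier_mat (mrank A) k"
    by (auto simp: adjoint_mult)
  then show ?thesis using mrank_mult_le_inner_dim by metis
qed

lemma mrank_add_le:
  "A \<in> carrier_mat k k \<Longrightarrow> (B :: complex mat) \<in> carrier_mat k k \<Longrightarrow> mrank (A + B) \<le> mrank A + mrank B"
  unfolding mrank_def using vec_space.rank_subadditive by simp

lemma mrank_zero [simp]: "mrank (0\<^sub>m k k :: complex mat) = 0"
  unfolding mrank_def using vec_space.rank_0I by simp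

subsection \<open>The algebra \<open>M\<^sup>a\<^sup>l\<^sup>g\<close> as a ring with involution\<close>

lemma prod_mat_ring_simps [simp]:
  "carrier (prod_mat_ring d) = {a. \<forall>n. a n \<in> carrier_mat (d n) (d n)}"
  "a \<otimes>\<^bsub>prod_mat_ring d\<^esub> b = (\<lambda>n. a n * b n)"
  "a \<oplus>\<^bsub>prod_mat_ring d\<^esub> b = (\<lambda>n. a n + b n)"
  "\<one>\<^bsub>prod_mat_ring d\<^esub> = (\<lambda>n. 1\<^sub>m (d n))"
  "\<zero>\<^bsub>prod_mat_ring d\<^esub> = (\<lambda>n. 0\<^sub>m (d n) (d n))"
  unfolding prod_mat_ring_def by simp_all

lemma ring_prod_mat_ring: "ring (prod_mat_ring d)"
proof (rule ringI)
  let ?P = "prod_mat_ring d"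
  show "abelian_group ?P"
  proof (rule abelian_groupI)
    fix x assume x: "x \<in> carrier ?P"
    show "\<exists>y\<in>carrier ?P. y \<oplus>\<^bsub>?P\<^esub> x = \<zero>\<^bsub>?P\<^esub>"
      by (rule bexI[of _ "\<lambda>n. - x n"]) (use x in auto)
  qed (auto simp: fun_eq_iff intro: assoc_add_mat comm_add_mat)
  show "monoid ?P"
    by (rule monoidI) (auto simp: fun_eq_iff intro: assoc_mult_mat mult_carrier_mat[of _ "d _" "d _" _ "d _"]
        left_mult_one_mat right_mult_one_mat)
qed (auto simp: fun_eq_iff intro: add_mult_distrib_mat mult_add_distrib_mat)

lemma (in ring) ideal_of_closed:
  assumes "I \<subseteq> carrier R" "\<zero> \<in> I" "\<And>a b. a \<in> I \<Longrightarrow> b \<in> I \<Longrightarrow> a \<oplus> b \<in> I"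
    and l_closed: "\<And>a x. a \<in> I \<Longrightarrow> x \<in> carrier R \<Longrightarrow> x \<otimes> a \<in> I"
    and r_closed: "\<And>a x. a \<in> I \<Longrightarrow> x \<in> carrier R \<Longrightarrow> a \<otimes> x \<in> I"
  shows "ideal I R"
proof (rule idealI[OF ring_axioms _ l_closed r_closed])
  have "\<ominus> a \<in> I" if "a \<in> I" for a
    using l_closed[OF that, of "\<ominus> \<one>"] that assms(1) by (auto simp: l_minus)
  then show "subgroup I (add_monoid R)"
    using add.subgroupI[of I] assms(1-3) by auto
qed

lemma null_ideal_rank_le:
  assumes "a \<in> null_ideal \<omega> d" "b \<in> carrier (prod_mat_ring d)" "\<And>n. mrank (b n) \<le> mrank (a n)"
  shows "b \<in> null_ideal \<omega> d"
proof -
  have lim_a: "((\<lambda>n. real (mrank (a n)) / real (d n)) \<longlongrightarrow> 0) \<omega>"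
    using assms(1) unfolding null_ideal_def by auto
  have "((\<lambda>n. real (mrank (b n)) / real (d n)) \<longlongrightarrow> 0) \<omega>"
    by (rule tendsto_sandwich[OF always_eventually always_eventually tendsto_const lim_a])
       (auto intro!: divide_right_mono assms(3))
  with assms(2) show ?thesis unfolding null_ideal_def by auto
qed

lemma null_ideal_add_closed:
  assumes "a \<in> null_ideal \<omega> d" "b \<in> null_ideal \<omega> d"
  shows "a \<oplus>\<^bsub>prod_mat_ring d\<^esub> b \<in> null_ideal \<omega> d"
proof -
  have a: "\<forall>n. a n \<in> carrier_mat (d n) (d n)" "((\<lambda>n. real (mrank (a n)) / real (d n)) \<longlongrightarrow> 0) \<omega>"
    and b: "\<forall>n. b n \<in> carrier_mat (d n) (d n)" "((\<lambda>n. real (mrank (b n)) / real (d n)) \<longlongrightarrow> 0) \<omega>"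
    using assms unfolding null_ideal_def by auto
  have "real (mrank (a n + b n)) / real (d n) \<le>
      real (mrank (a n)) / real (d n) + real (mrank (b n)) / real (d n)" for n
    using mrank_add_le[OF a(1)[rule_format] b(1)[rule_format], of n]
    by (simp add: divide_right_mono flip: add_divide_distrib)
  then have "((\<lambda>n. real (mrank (a n + b n)) / real (d n)) \<longlongrightarrow> 0) \<omega>"
    by (intro tendsto_sandwich[OF always_eventually always_eventually tendsto_const
          tendsto_add_zero[OF a(2) b(2)]]) auto
  with a(1) b(1) show ?thesis unfolding null_ideal_def by auto
qed

lemma ideal_null_ideal: "ideal (null_ideal \<omega> d) (prod_mat_ring d)"
proof (rule ring.ideal_of_closed[OF ring_prod_mat_ring])
  show "\<zero>\<^bsub>prod_mat_ring d\<^esub> \<in> null_ideal \<omega> d"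
    by (simp add: null_ideal_def)
  fix a x assume a: "a \<in> null_ideal \<omega> d" and x: "x \<in> carrier (prod_mat_ring d)"
  have "a \<in> carrier (prod_mat_ring d)" using a unfolding null_ideal_def by blast
  then show "x \<otimes>\<^bsub>prod_mat_ring d\<^esub> a \<in> null_ideal \<omega> d" "a \<otimes>\<^bsub>prod_mat_ring d\<^esub> x \<in> null_ideal \<omega> d"
    using x by (auto intro!: null_ideal_rank_le[OF a] mrank_mult_le_left mrank_mult_le_right
        mult_carrier_mat[of _ "d _" "d _" _ "d _"])
next
  show "null_ideal \<omega> d \<subseteq> carrier (prod_mat_ring d)"
    unfolding null_ideal_def by blast
qed (use null_ideal_add_closed in blast)

text \<open>Additivity of the involution is needed here to compute the image of a coset.\<close>
lemma (in ideal) involutive_ring_quotient: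
  assumes closed: "\<And>x. x \<in> carrier R \<Longrightarrow> \<sigma> x \<in> carrier R"
    and invol: "\<And>x. x \<in> carrier R \<Longrightarrow> \<sigma> (\<sigma> x) = x"
    and add: "\<And>x y. x \<in> carrier R \<Longrightarrow> y \<in> carrier R \<Longrightarrow> \<sigma> (x \<oplus> y) = \<sigma> x \<oplus> \<sigma> y"
    and mult: "\<And>x y. x \<in> carrier R \<Longrightarrow> y \<in> carrier R \<Longrightarrow> \<sigma> (x \<otimes> y) = \<sigma> y \<otimes> \<sigma> x"
    and ideal_closed: "\<And>x. x \<in> I \<Longrightarrow> \<sigma> x \<in> I"
  shows "involutive_ring (R Quot I) ((`) \<sigma>)"
proof -
  have "\<sigma> ` I = I"
  proof
    show "\<sigma> ` I \<subseteq> I" using ideal_closed by blast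
    show "I \<subseteq> \<sigma> ` I"
    proof
      fix h assume h: "h \<in> I"
      then have "h = \<sigma> (\<sigma> h)" using invol a_subset by auto
      then show "h \<in> \<sigma> ` I" using ideal_closed h by blast
    qed
  qed
  have coset_image: "I +> b = (\<lambda>h. h \<oplus> b) ` I" for b
    by (auto simp: a_r_coset_def')
  have coset: "\<sigma> ` (I +> a) = I +> \<sigma> a" if "a \<in> carrier R" for a
  proof -
    have "\<sigma> ` (I +> a) = (\<lambda>h. \<sigma> h \<oplus> \<sigma> a) ` I"
      unfolding coset_image image_image using that a_subset by (auto simp: add)
    also have "\<dots> = (\<lambda>h. h \<oplus> \<sigma> a) ` (\<sigma> ` I)"
      by (simp add: image_image)
    finally show ?thesis using \<open>\<sigma> ` I = I\<close> coset_image by simp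
  qed
  have carrier_Quot: "carrier (R Quot I) = (\<lambda>a. I +> a) ` carrier R"
    by (auto simp: FactRing_def A_RCOSETS_def')
  interpret Q: ring "R Quot I" by (rule quotient_is_ring)
  show ?thesis
  proof unfold_locales
    fix X Y assume "X \<in> carrier (R Quot I)" "Y \<in> carrier (R Quot I)"
    then obtain a b where ab: "a \<in> carrier R" "b \<in> carrier R" "X = I +> a" "Y = I +> b"
      unfolding carrier_Quot by blast
    show "\<sigma> ` X \<in> carrier (R Quot I)" "\<sigma> ` \<sigma> ` X = X"
      using ab by (simp_all add: carrier_Quot coset closed invol)
    show "\<sigma> ` (X \<otimes>\<^bsub>R Quot I\<^esub> Y) = \<sigma> ` Y \<otimes>\<^bsub>R Quot I\<^esub> \<sigma> ` X"
      using ab by (simp add: FactRing_def rcoset_mult_add coset closed mult)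
  qed
qed

lemma involutive_ring_M_alg: "involutive_ring (M_alg \<omega> d) alg_star"
proof -
  let ?adj = "\<lambda>a n. mat_adjoint (a n)"
  have "alg_star = (`) ?adj" by (rule ext) (simp add: alg_star_def)
  moreover have "involutive_ring (M_alg \<omega> d) ((`) ?adj)"
    unfolding M_alg_def
  proof (rule ideal.involutive_ring_quotient[OF ideal_null_ideal])
    fix x assume x: "x \<in> null_ideal \<omega> d"
    then have "\<forall>n. x n \<in> carrier_mat (d n) (d n)" unfolding null_ideal_def by auto
    then show "?adj x \<in> null_ideal \<omega> d"
      by (auto intro!: null_ideal_rank_le[OF x] mrank_adjoint_le adjoint_carrier)
  qed (auto simp: fun_eq_iff intro!: adjoint_add[of _ "d _" "d _"] adjoint_mult[of _ "d _" "d _" _ "d _"])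
  ultimately show ?thesis by simp
qed

lemma star_regular_subring_iff:
  "star_regular_subring \<omega> d S \<longleftrightarrow> star_regular (M_alg \<omega> d) alg_star S"
  using involutive_ring_M_alg
  unfolding star_regular_subring_def star_regular_def star_regular_axioms_def by auto

theorem mainTheorem3:
  fixes \<omega> :: "nat filter" and d :: "nat \<Rightarrow> nat"
    and R :: "'i \<Rightarrow> (nat \<Rightarrow> complex mat) set set" and I :: "'i set"
  assumes "is_ultrafilter \<omega>" and "nonprincipal \<omega>"
    and "\<And>n. d n > 0"
    and "I \<noteq> {}"
    and "\<And>i. i \<in> I \<Longrightarrow> star_regular_subring \<omega> d (R i)"
  shows "star_regular_subring \<omega> d (\<Inter>i\<in>I. R i)"
  using star_regular_Inter[OF involutive_ring_M_alg assms(4)] assms(5)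
  by (simp add: star_regular_subring_iff)

end
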